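(* For every $n\ge1$, $$\mathrm{vol}\,C(\mathbb{A}_n)=\sum_{i=1}^{n}\binom{n-1}{i-1}\binom{n+1}{i}=\binom{2n}{n}.$$
   Context: Let $\Phi^+=\{e_i+e_{i+1}+\dots+e_j: 1\le i\le j\le n\}\subset\mathbb{Z}^n$ and $C(\mathbb{A}_n)=\mathrm{conv}(\Phi^+\cup(-\Phi^+))\subset\mathbb{R}^n$, the convex hull of all roots of the root system $\mathbb{A}_n$ written in the basis of simple roots. The integral volume $\mathrm{vol}$ on $\mathbb{R}^n$ is $n!$ times Lebesgue measure. *)

theory Defs
  imports "HOL-Analysis.Analysis"
begin

text \<open>Coordinates of R^n are indexed by a finite linearly ordered type 'n
  (isomorphic to {1..n} with n = CARD('n)). The positive root
  e_i + ... + e_j (i \<le> j) in the basis of simple roots:\<close>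

definition interval_root :: "'n::{finite,linorder} \<Rightarrow> 'n::{finite,linorder} \<Rightarrow> real^('n::{finite,linorder})" where
  "interval_root i j = (\<chi> k. if i \<le> k \<and> k \<le> j then 1 else 0)"

definition pos_roots_A :: "(real^('n::{finite,linorder})) set" where
  "pos_roots_A = {interval_root i j | i j. i \<le> j}"

definition root_polytope_A :: "(real^('n::{finite,linorder})) set" where
  "root_polytope_A = convex hull (pos_roots_A \<union> uminus ` pos_roots_A)"

definition int_vol :: "(real^('n::finite)) set \<Rightarrow> real" where
  "int_vol S = fact CARD('n) * measure lebesgue S"

end

theory Submission
  imports Defs
begin

text \<open>Write the roots of \<open>A\<^sub>n\<close> as \<open>\<epsilon>\<^sub>a - \<epsilon>\<^sub>b\<close> with \<open>a \<noteq> b\<close> in \<open>{1..n+1}\<close>,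
  where \<open>\<epsilon>\<^sub>1, \<dots>, \<epsilon>\<^sub>n\<close> is the standard basis and \<open>\<epsilon>\<^sub>n\<^sub>+\<^sub>1 = 0\<close>. Passing from these
  coordinates to those of the simple roots \<open>\<epsilon>\<^sub>k - \<epsilon>\<^sub>k\<^sub>+\<^sub>1\<close> is the unimodular map of partial
  sums, so \<open>vol C(A\<^sub>n)\<close> is the volume of the convex hull of the \<open>\<epsilon>\<^sub>a - \<epsilon>\<^sub>b\<close>. That hull is the
  body Y of vectors whose positive parts and whose negative parts each sum to at most 1. On the
  orthant with sign pattern S, Y is a product of two standard simplices, so
  \<open>n! vol Y = \<Sum>\<^sub>S n! / (|S|! (n - |S|)!) = \<Sum>\<^sub>k (n choose k)\<^sup>2 = (2n choose n)\<close>.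
  The sum in the statement equals \<open>(2n choose n)\<close> by Vandermonde's identity.\<close>

section \<open>Volume of the body bounded by positive and negative mass\<close>

definition simplex_vol :: "nat \<Rightarrow> real \<Rightarrow> real" where
  "simplex_vol k x = x ^ k / fact k"

lemma simplex_vol_nonneg: "x \<ge> 0 \<Longrightarrow> simplex_vol k x \<ge> 0"
  by (simp add: simplex_vol_def)

lemma has_real_derivative_simplex_vol:
  "(simplex_vol (Suc k) has_real_derivative simplex_vol k x) (at x)"
proof -
  have "((\<lambda>x. x ^ Suc k) has_real_derivative real (Suc k) * x ^ k) (at x)"
    using DERIV_pow[of "Suc k" x] by simp
  from DERIV_cdivide[OF this, of "fact (Suc k)"] show ?thesis
    unfolding simplex_vol_def by (simp add: fact_Suc del: of_nat_Suc)
qed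

lemma borel_measurable_simplex_vol [measurable]: "simplex_vol k \<in> borel_measurable borel"
  unfolding simplex_vol_def by simp

lemma nn_integral_simplex_vol_left:
  assumes "s \<ge> 0"
  shows "(\<integral>\<^sup>+y\<in>{0..s}. ennreal (simplex_vol k (s - y)) \<partial>lborel) = ennreal (simplex_vol (Suc k) s)"
proof -
  have "((\<lambda>y. - simplex_vol (Suc k) (s - y)) has_real_derivative simplex_vol k (s - x)) (at x)" for x
    by (auto intro!: derivative_eq_intros DERIV_chain2[OF has_real_derivative_simplex_vol])
  then show ?thesis
    using assms by (subst nn_integral_FTC_Icc) (auto simp: simplex_vol_def)
qed

lemma nn_integral_simplex_vol_right:
  assumes "t \<ge> 0"
  shows "(\<integral>\<^sup>+y\<in>{-t..<0}. ennreal (simplex_vol k (t + y)) \<partial>lborel) = ennreal (simplex_vol (Suc k) t)"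
proof -
  have "((\<lambda>y. simplex_vol (Suc k) (t + y)) has_real_derivative simplex_vol k (t + x)) (at x)" for x
    using DERIV_chain2[OF has_real_derivative_simplex_vol DERIV_add[OF DERIV_const DERIV_ident]] by simp
  then have "(\<integral>\<^sup>+y\<in>{-t..0}. ennreal (simplex_vol k (t + y)) \<partial>lborel) = ennreal (simplex_vol (Suc k) t)"
    using assms by (subst nn_integral_FTC_Icc) (auto simp: simplex_vol_def)
  moreover have "(\<integral>\<^sup>+y\<in>{-t..<0}. ennreal (simplex_vol k (t + y)) \<partial>lborel)
      = (\<integral>\<^sup>+y\<in>{-t..0}. ennreal (simplex_vol k (t + y)) \<partial>lborel)"
    by (intro nn_integral_cong_AE, use AE_lborel_singleton[of 0] in eventually_elim)
      (auto split: split_indicator)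
  ultimately show ?thesis by simp
qed

definition pos_neg_bounded :: "'i set \<Rightarrow> real \<Rightarrow> real \<Rightarrow> ('i \<Rightarrow> real) set" where
  "pos_neg_bounded A s t = {f. (\<Sum>i\<in>A. max (f i) 0) \<le> s \<and> (\<Sum>i\<in>A. max (- f i) 0) \<le> t}"

text \<open>A point whose nonnegative coordinates are those in S lies in \<open>pos_neg_bounded A s t\<close> iff
  its positive part lies in the simplex of size s on S and its negative part in the simplex of
  size t on \<open>A - S\<close>.\<close>
definition pos_neg_volume :: "'i set \<Rightarrow> real \<Rightarrow> real \<Rightarrow> real" where
  "pos_neg_volume A s t = (\<Sum>S\<in>Pow A. simplex_vol (card S) s * simplex_vol (card (A - S)) t)"

lemma sets_pos_neg_bounded [measurable]:
  assumes "finite A"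
  shows "pos_neg_bounded A s t \<inter> space (Pi\<^sub>M A (\<lambda>_. lborel)) \<in> sets (Pi\<^sub>M A (\<lambda>_. lborel))"
proof -
  have "pos_neg_bounded A s t \<inter> space (Pi\<^sub>M A (\<lambda>_. lborel)) =
      {f \<in> space (Pi\<^sub>M A (\<lambda>_. lborel)). (\<Sum>i\<in>A. max (f i) 0) \<le> s \<and> (\<Sum>i\<in>A. max (- f i) 0) \<le> t}"
    by (auto simp: pos_neg_bounded_def)
  also have "\<dots> \<in> sets (Pi\<^sub>M A (\<lambda>_. lborel))"
    using assms by measurable
  finally show ?thesis .
qed

lemma borel_measurable_pos_neg_volume [measurable]:
  "(\<lambda>y. pos_neg_volume A (s - y) t) \<in> borel_measurable borel"
  "(\<lambda>y. pos_neg_volume A s (t + y)) \<in> borel_measurable borel"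
  unfolding pos_neg_volume_def by simp_all

lemma pos_neg_volume_nonneg: "s \<ge> 0 \<Longrightarrow> t \<ge> 0 \<Longrightarrow> pos_neg_volume A s t \<ge> 0"
  unfolding pos_neg_volume_def by (intro sum_nonneg mult_nonneg_nonneg simplex_vol_nonneg)

lemma fun_upd_in_pos_neg_bounded_insert:
  assumes "finite A" "b \<notin> A"
  shows "x(b := y) \<in> pos_neg_bounded (insert b A) s t \<longleftrightarrow>
    (0 \<le> y \<and> y \<le> s \<and> x \<in> pos_neg_bounded A (s - y) t) \<or> (-t \<le> y \<and> y < 0 \<and> x \<in> pos_neg_bounded A s (t + y))"
proof -
  have "(\<Sum>i\<in>A. max ((x(b := y)) i) 0) = (\<Sum>i\<in>A. max (x i) 0)"
    "(\<Sum>i\<in>A. max (- (x(b := y)) i) 0) = (\<Sum>i\<in>A. max (- x i) 0)"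
    using assms by (auto intro: sum.cong)
  moreover have "(\<Sum>i\<in>A. max (x i) 0) \<ge> 0" "(\<Sum>i\<in>A. max (- x i) 0) \<ge> 0"
    by (auto intro: sum_nonneg)
  ultimately show ?thesis
    using assms unfolding pos_neg_bounded_def by auto
qed

lemma pos_neg_volume_insert:
  assumes "finite A" "b \<notin> A"
  shows "pos_neg_volume (insert b A) s t =
     (\<Sum>S\<in>Pow A. simplex_vol (Suc (card S)) s * simplex_vol (card (A - S)) t)
   + (\<Sum>S\<in>Pow A. simplex_vol (card S) s * simplex_vol (Suc (card (A - S))) t)"
proof -
  let ?f = "\<lambda>S. simplex_vol (card S) s * simplex_vol (card (insert b A - S)) t"
  have "pos_neg_volume (insert b A) s t = (\<Sum>S\<in>insert b ` Pow A. ?f S) + (\<Sum>S\<in>Pow A. ?f S)"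
    using assms unfolding pos_neg_volume_def Pow_insert by (subst sum.union_disjoint) auto
  also have "(\<Sum>S\<in>insert b ` Pow A. ?f S) = (\<Sum>S\<in>Pow A. ?f (insert b S))"
    using assms by (intro sum.reindex_cong[of "insert b"]) (auto simp: inj_on_def)
  also have "\<dots> = (\<Sum>S\<in>Pow A. simplex_vol (Suc (card S)) s * simplex_vol (card (A - S)) t)"
  proof (intro sum.cong refl)
    fix S assume "S \<in> Pow A"
    then have "finite S" "b \<notin> S" using assms finite_subset by auto
    then have "card (insert b S) = Suc (card S)" by simp
    moreover have "insert b A - insert b S = A - S" using \<open>S \<in> Pow A\<close> assms by auto
    ultimately
    show "?f (insert b S) = simplex_vol (Suc (card S)) s * simplex_vol (card (A - S)) t" by simp
  qed
  also have "(\<Sum>S\<in>Pow A. ?f S) = (\<Sum>S\<in>Pow A. simplex_vol (card S) s * simplex_vol (Suc (card (A - S))) t)"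
  proof (intro sum.cong refl)
    fix S assume "S \<in> Pow A"
    then have "insert b A - S = insert b (A - S)" using assms by auto
    then show "?f S = simplex_vol (card S) s * simplex_vol (Suc (card (A - S))) t"
      using assms by simp
  qed
  finally show ?thesis .
qed

lemma nn_integral_pos_neg_volume_left:
  assumes "s \<ge> 0" "t \<ge> 0"
  shows "(\<integral>\<^sup>+y\<in>{0..s}. ennreal (pos_neg_volume A (s - y) t) \<partial>lborel)
       = ennreal (\<Sum>S\<in>Pow A. simplex_vol (Suc (card S)) s * simplex_vol (card (A - S)) t)"
proof -
  have "(\<integral>\<^sup>+y\<in>{0..s}. ennreal (pos_neg_volume A (s - y) t) \<partial>lborel)
      = (\<integral>\<^sup>+y. (\<Sum>S\<in>Pow A. (ennreal (simplex_vol (card S) (s - y)) * indicator {0..s} y)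
                                * ennreal (simplex_vol (card (A - S)) t)) \<partial>lborel)"
    using assms unfolding pos_neg_volume_def
    by (intro nn_integral_cong)
      (auto simp: simplex_vol_nonneg ennreal_mult' simp flip: sum_ennreal split: split_indicator)
  also have "\<dots> = (\<Sum>S\<in>Pow A. ennreal (simplex_vol (Suc (card S)) s) * ennreal (simplex_vol (card (A - S)) t))"
    using assms by (simp add: nn_integral_sum nn_integral_multc nn_integral_simplex_vol_left)
  also have "\<dots> = ennreal (\<Sum>S\<in>Pow A. simplex_vol (Suc (card S)) s * simplex_vol (card (A - S)) t)"
    using assms by (simp add: simplex_vol_nonneg ennreal_mult' flip: sum_ennreal)
  finally show ?thesis .
qed

lemma nn_integral_pos_neg_volume_right:
  assumes "s \<ge> 0" "t \<ge> 0"
  shows "(\<integral>\<^sup>+y\<in>{-t..<0}. ennreal (pos_neg_volume A s (t + y)) \<partial>lborel)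
       = ennreal (\<Sum>S\<in>Pow A. simplex_vol (card S) s * simplex_vol (Suc (card (A - S))) t)"
proof -
  have "(\<integral>\<^sup>+y\<in>{-t..<0}. ennreal (pos_neg_volume A s (t + y)) \<partial>lborel)
      = (\<integral>\<^sup>+y. (\<Sum>S\<in>Pow A. ennreal (simplex_vol (card S) s)
                   * (ennreal (simplex_vol (card (A - S)) (t + y)) * indicator {-t..<0} y)) \<partial>lborel)"
    using assms unfolding pos_neg_volume_def
    by (intro nn_integral_cong)
      (auto simp: simplex_vol_nonneg ennreal_mult' simp flip: sum_ennreal split: split_indicator)
  also have "\<dots> = (\<Sum>S\<in>Pow A. ennreal (simplex_vol (card S) s) * ennreal (simplex_vol (Suc (card (A - S))) t))"
    using assms by (simp add: nn_integral_sum nn_integral_cmult nn_integral_simplex_vol_right)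
  also have "\<dots> = ennreal (\<Sum>S\<in>Pow A. simplex_vol (card S) s * simplex_vol (Suc (card (A - S))) t)"
    using assms by (simp add: simplex_vol_nonneg ennreal_mult' flip: sum_ennreal)
  finally show ?thesis .
qed

lemma emeasure_pos_neg_bounded:
  assumes "finite A" "s \<ge> 0" "t \<ge> 0"
  shows "emeasure (Pi\<^sub>M A (\<lambda>_. lborel)) (pos_neg_bounded A s t \<inter> space (Pi\<^sub>M A (\<lambda>_. lborel)))
       = ennreal (pos_neg_volume A s t)"
  using assms
proof (induction arbitrary: s t rule: finite_induct)
  case empty
  then show ?case by (simp add: PiM_empty pos_neg_bounded_def pos_neg_volume_def simplex_vol_def)
next
  case (insert b A s t)
  interpret product_sigma_finite "\<lambda>_. lborel :: real measure"
    by standard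
  let ?M = "\<lambda>A. Pi\<^sub>M A (\<lambda>_. lborel :: real measure)"
  let ?E = "\<lambda>A s t. pos_neg_bounded A s t \<inter> space (?M A)"
  have "emeasure (?M (insert b A)) (?E (insert b A) s t)
      = (\<integral>\<^sup>+ y. \<integral>\<^sup>+ x. indicator (?E (insert b A) s t) (x(b := y)) \<partial>?M A \<partial>lborel)"
    using insert by (simp add: product_nn_integral_insert_rev flip: nn_integral_indicator)
  also have "\<dots> = (\<integral>\<^sup>+ y. \<integral>\<^sup>+ x. indicator {0..s} y * indicator (?E A (s - y) t) x
                      + indicator {-t..<0} y * indicator (?E A s (t + y)) x \<partial>?M A \<partial>lborel)"
  proof (intro nn_integral_cong)
    fix y x assume x: "x \<in> space (?M A)"
    then have "x(b := y) \<in> space (?M (insert b A))"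
      by (auto simp: space_PiM PiE_def extensional_def)
    then show "indicator (?E (insert b A) s t) (x(b := y)) =
      (indicator {0..s} y * indicator (?E A (s - y) t) x + indicator {-t..<0} y * indicator (?E A s (t + y)) x :: ennreal)"
      using x by (cases "0 \<le> y") (simp_all add: fun_upd_in_pos_neg_bounded_insert[OF insert.hyps] split: split_indicator)
  qed
  also have "\<dots> = (\<integral>\<^sup>+ y. indicator {0..s} y * emeasure (?M A) (?E A (s - y) t)
                      + indicator {-t..<0} y * emeasure (?M A) (?E A s (t + y)) \<partial>lborel)"
    using insert.hyps by (intro nn_integral_cong) (simp add: nn_integral_add nn_integral_cmult)
  also have "\<dots> = (\<integral>\<^sup>+y\<in>{0..s}. ennreal (pos_neg_volume A (s - y) t) \<partial>lborel)
                 + (\<integral>\<^sup>+y\<in>{-t..<0}. ennreal (pos_neg_volume A s (t + y)) \<partial>lborel)"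
    using insert.IH insert.prems
    by (subst nn_integral_add[symmetric]) (auto intro!: nn_integral_cong split: split_indicator)
  also have "\<dots> = ennreal (pos_neg_volume (insert b A) s t)"
    using insert
    by (simp add: nn_integral_pos_neg_volume_left nn_integral_pos_neg_volume_right pos_neg_volume_insert
        sum_nonneg simplex_vol_nonneg flip: ennreal_plus)
  finally show ?case .
qed

lemma pos_neg_volume_one_one:
  assumes "finite A"
  shows "pos_neg_volume A 1 1 = real ((2 * card A) choose card A) / fact (card A)"
proof -
  let ?n = "card A"
  let ?f = "\<lambda>S. 1 / (fact (card S) * fact (?n - card S) :: real)"
  have "pos_neg_volume A 1 1 = (\<Sum>S\<in>Pow A. ?f S)"
    unfolding pos_neg_volume_def simplex_vol_def using assms
    by (auto simp: card_Diff_subset finite_subset intro!: sum.cong)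
  also have "\<dots> = (\<Sum>k\<le>?n. \<Sum>S\<in>{S\<in>Pow A. card S = k}. ?f S)"
    using assms by (intro sum.group[symmetric]) (auto simp: card_mono)
  also have "\<dots> = (\<Sum>k\<le>?n. real ((?n choose k) ^ 2) / fact ?n)"
  proof (intro sum.cong refl)
    fix k assume "k \<in> {..?n}"
    then have "real (?n choose k) = fact ?n / (fact k * fact (?n - k))"
      by (simp add: binomial_fact)
    moreover have "card {S\<in>Pow A. card S = k} = ?n choose k"
      using n_subsets[OF assms, of k] by simp
    ultimately show "(\<Sum>S\<in>{S\<in>Pow A. card S = k}. ?f S) = real ((?n choose k) ^ 2) / fact ?n"
      by (simp add: power2_eq_square field_simps)
  qed
  also have "\<dots> = real ((2 * ?n) choose ?n) / fact ?n"
    by (simp only: sum_divide_distrib[symmetric] of_nat_sum[symmetric] choose_square_sum)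
  finally show ?thesis .
qed

definition pos_neg_body :: "'a::euclidean_space set" where
  "pos_neg_body = {y. (\<Sum>b\<in>Basis. max (y \<bullet> b) 0) \<le> 1 \<and> (\<Sum>b\<in>Basis. max (- (y \<bullet> b)) 0) \<le> 1}"

text \<open>Convexity and closedness of the body come from writing it as an intersection of half-spaces.\<close>
lemma sum_max_zero_le_iff:
  fixes g :: "'a \<Rightarrow> real"
  assumes "finite B"
  shows "(\<Sum>b\<in>B. max (g b) 0) \<le> c \<longleftrightarrow> (\<forall>S\<subseteq>B. (\<Sum>b\<in>S. g b) \<le> c)"
proof
  assume le: "(\<Sum>b\<in>B. max (g b) 0) \<le> c"
  show "\<forall>S\<subseteq>B. (\<Sum>b\<in>S. g b) \<le> c"
  proof (intro allI impI)
    fix S assume "S \<subseteq> B"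
    then have "(\<Sum>b\<in>S. g b) \<le> (\<Sum>b\<in>S. max (g b) 0)" "(\<Sum>b\<in>S. max (g b) 0) \<le> (\<Sum>b\<in>B. max (g b) 0)"
      using assms by (auto intro: sum_mono sum_mono2)
    then show "(\<Sum>b\<in>S. g b) \<le> c" using le by linarith
  qed
next
  assume "\<forall>S\<subseteq>B. (\<Sum>b\<in>S. g b) \<le> c"
  then have "(\<Sum>b\<in>{b\<in>B. g b > 0}. g b) \<le> c" by simp
  moreover have "(\<Sum>b\<in>{b\<in>B. g b > 0}. g b) = (\<Sum>b\<in>B. max (g b) 0)"
    using assms by (auto simp: sum.inter_filter max_def intro!: sum.cong)
  ultimately show "(\<Sum>b\<in>B. max (g b) 0) \<le> c" by simp
qed

lemma pos_neg_body_eq_Inter_halfspaces: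
  "pos_neg_body = (\<Inter>S\<in>Pow Basis. {y. \<Sum>S \<bullet> y \<le> 1} \<inter> {y. \<Sum>S \<bullet> y \<ge> -1})"
  by (auto simp: pos_neg_body_def sum_max_zero_le_iff inner_sum_left inner_sum_right inner_commute sum_negf)

lemma convex_pos_neg_body: "convex pos_neg_body"
  unfolding pos_neg_body_eq_Inter_halfspaces
  by (intro convex_INT convex_Int convex_halfspace_le convex_halfspace_ge)

lemma closed_pos_neg_body: "closed pos_neg_body"
  unfolding pos_neg_body_eq_Inter_halfspaces
  by (intro closed_INT ballI closed_Int closed_halfspace_le closed_halfspace_ge)

lemma bounded_pos_neg_body: "bounded pos_neg_body"
proof -
  have "norm y \<le> 2" if "y \<in> pos_neg_body" for y :: 'a
  proof -
    have "(\<Sum>b\<in>Basis. \<bar>y \<bullet> b\<bar>) = (\<Sum>b\<in>Basis. max (y \<bullet> b) 0) + (\<Sum>b\<in>Basis. max (- (y \<bullet> b)) 0)"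
      by (simp add: sum.distrib[symmetric]) (intro sum.cong; auto)
    then show ?thesis
      using that norm_le_l1[of y] unfolding pos_neg_body_def by auto
  qed
  then show ?thesis by (auto simp: bounded_iff)
qed

lemma lmeasurable_pos_neg_body: "pos_neg_body \<in> lmeasurable"
  by (intro lmeasurable_compact) (simp add: compact_eq_bounded_closed bounded_pos_neg_body closed_pos_neg_body)

lemma emeasure_pos_neg_body: "emeasure lborel (pos_neg_body :: 'a::euclidean_space set) = pos_neg_volume (Basis :: 'a set) 1 1"
proof -
  let ?M = "Pi\<^sub>M (Basis :: 'a set) (\<lambda>_. lborel)"
  have [measurable]: "(pos_neg_body :: 'a set) \<in> sets borel"
    by (simp add: borel_closed closed_pos_neg_body)
  have "(\<Sum>b\<in>(Basis :: 'a set). f b *\<^sub>R b) \<bullet> c = f c" if "c \<in> Basis" for f c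
    using that by (simp add: inner_sum_left inner_Basis if_distrib cong: if_cong)
  then have "(\<lambda>f. \<Sum>b\<in>Basis. f b *\<^sub>R b) -` pos_neg_body \<inter> space ?M = pos_neg_bounded Basis 1 1 \<inter> space ?M"
    unfolding pos_neg_body_def pos_neg_bounded_def by (auto cong: sum.cong)
  then show ?thesis
    by (subst lborel_eq) (simp add: emeasure_distr emeasure_pos_neg_bounded)
qed

lemma measure_pos_neg_body:
  "measure lebesgue (pos_neg_body :: 'a::euclidean_space set) = real ((2 * DIM('a)) choose DIM('a)) / fact DIM('a)"
proof -
  have "measure lebesgue (pos_neg_body :: 'a set) = measure lborel (pos_neg_body :: 'a set)"
    by (simp add: borel_closed closed_pos_neg_body)
  also have "\<dots> = pos_neg_volume (Basis :: 'a set) 1 1"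
    by (simp add: measure_def emeasure_pos_neg_body pos_neg_volume_nonneg)
  finally show ?thesis by (simp add: pos_neg_volume_one_one)
qed

section \<open>The convex hull of the differences \<open>\<epsilon>\<^sub>a - \<epsilon>\<^sub>b\<close>\<close>

lemma sum_sum_scaleR_diff:
  fixes E :: "'i \<Rightarrow> 'v::real_vector"
  shows "(\<Sum>a\<in>I. \<Sum>b\<in>I. (p a * q b) *\<^sub>R (E a - E b))
       = sum q I *\<^sub>R (\<Sum>a\<in>I. p a *\<^sub>R E a) - sum p I *\<^sub>R (\<Sum>b\<in>I. q b *\<^sub>R E b)"
proof -
  have "(\<Sum>a\<in>I. \<Sum>b\<in>I. (p a * q b) *\<^sub>R E a) = sum q I *\<^sub>R (\<Sum>a\<in>I. p a *\<^sub>R E a)"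
    by (simp add: scaleR_sum_right mult.commute flip: scaleR_sum_left sum_distrib_left)
  moreover have "(\<Sum>a\<in>I. \<Sum>b\<in>I. (p a * q b) *\<^sub>R E b) = sum p I *\<^sub>R (\<Sum>b\<in>I. q b *\<^sub>R E b)"
    by (subst sum.swap) (simp add: scaleR_sum_right flip: scaleR_sum_left sum_distrib_right)
  ultimately show ?thesis
    by (simp add: scaleR_diff_right sum_subtractf)
qed

text \<open>Split d into positive and negative parts p and q, of common mass t; then \<open>\<Sum> d i E i\<close>
  is t times the mixture of the differences \<open>E a - E b\<close> with weights \<open>p a q b / t\<^sup>2\<close>.\<close>
lemma zero_sum_combination_in_convex_hull_differences:
  fixes E :: "'i \<Rightarrow> 'v::real_vector" and d :: "'i \<Rightarrow> real"
  assumes "finite I" "I \<noteq> {}" "(\<Sum>i\<in>I. d i) = 0" "(\<Sum>i\<in>I. max (d i) 0) \<le> 1"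
  shows "(\<Sum>i\<in>I. d i *\<^sub>R E i) \<in> convex hull {E a - E b | a b. a \<in> I \<and> b \<in> I}"
proof -
  let ?H = "convex hull {E a - E b | a b. a \<in> I \<and> b \<in> I}"
  define p where "p i = max (d i) 0" for i
  define q where "q i = max (- d i) 0" for i
  define t where "t = (\<Sum>i\<in>I. p i)"
  have pq: "p i \<ge> 0" "q i \<ge> 0" "d i = p i - q i" for i
    by (auto simp: p_def q_def)
  have sum_q: "(\<Sum>i\<in>I. q i) = t"
    using assms(3) by (simp add: t_def pq(3) sum_subtractf)
  have "0 \<in> ?H"
    using assms(2) by (intro hull_inc) force
  show ?thesis
  proof (cases "t = 0")
    case True
    then have "p i = 0" "q i = 0" if "i \<in> I" for i
      using that sum_q assms(1) pq by (simp_all add: t_def sum_nonneg_eq_0_iff)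
    then show ?thesis
      using \<open>0 \<in> ?H\<close> pq(3) by simp
  next
    case False
    moreover have "t \<ge> 0"
      unfolding t_def using pq(1) by (simp add: sum_nonneg)
    moreover have "t \<le> 1"
      using assms(4) by (simp add: t_def p_def)
    ultimately have "t > 0" by simp
    define w where "w = (\<lambda>(a, b). p a * q b / t\<^sup>2)"
    have sum_w: "(\<Sum>ab\<in>I \<times> I. w ab *\<^sub>R g ab) = (\<Sum>a\<in>I. \<Sum>b\<in>I. (p a * q b / t\<^sup>2) *\<^sub>R g (a, b))"
      for g :: "'i \<times> 'i \<Rightarrow> 'v"
      unfolding w_def sum.cartesian_product by (intro sum.cong) auto
    have "(\<Sum>ab\<in>I \<times> I. w ab *\<^sub>R (E (fst ab) - E (snd ab))) \<in> ?H"
    proof (rule convex_sum[OF _ convex_convex_hull])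
      have "(\<Sum>ab\<in>I \<times> I. w ab) = (\<Sum>a\<in>I. \<Sum>b\<in>I. p a * q b) / t\<^sup>2"
        unfolding w_def sum.cartesian_product sum_divide_distrib by (intro sum.cong) auto
      then show "(\<Sum>ab\<in>I \<times> I. w ab) = 1"
        using \<open>t > 0\<close> sum_q by (simp add: t_def power2_eq_square flip: sum_product)
      show "w ab \<ge> 0" for ab
        using pq by (simp add: w_def split: prod.split)
      show "E (fst ab) - E (snd ab) \<in> ?H" if "ab \<in> I \<times> I" for ab
        using that by (intro hull_inc) force
    qed (use assms(1) in simp)
    also have "(\<Sum>ab\<in>I \<times> I. w ab *\<^sub>R (E (fst ab) - E (snd ab)))
        = (1 / t\<^sup>2) *\<^sub>R (\<Sum>a\<in>I. \<Sum>b\<in>I. (p a * q b) *\<^sub>R (E a - E b))"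
      by (simp add: sum_w scaleR_sum_right)
    also have "\<dots> = (1 / t) *\<^sub>R (\<Sum>i\<in>I. d i *\<^sub>R E i)"
      using \<open>t > 0\<close>
      by (simp add: sum_sum_scaleR_diff sum_q flip: t_def)
        (simp add: pq(3) scaleR_left_diff_distrib sum_subtractf power2_eq_square flip: scaleR_diff_right)
    finally have "(1 / t) *\<^sub>R (\<Sum>i\<in>I. d i *\<^sub>R E i) \<in> ?H" .
    from convexD[OF convex_convex_hull this \<open>0 \<in> ?H\<close>, of t "1 - t"]
    show ?thesis using \<open>t > 0\<close> \<open>t \<le> 1\<close> by simp
  qed
qed

text \<open>\<open>'n option\<close> models the index set \<open>{1..n+1}\<close>, with None the last index, whose basis
  vector is projected to 0.\<close>
definition axis_opt :: "'n option \<Rightarrow> real^'n::finite" where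
  "axis_opt a = (case a of None \<Rightarrow> 0 | Some k \<Rightarrow> axis k 1)"

definition epsilon_diffs :: "(real^'n::finite) set" where
  "epsilon_diffs = {axis_opt a - axis_opt b | a b. True}"

lemma axis_opt_nth: "axis_opt a $ k = (if a = Some k then 1 else 0)"
  by (cases a) (auto simp: axis_opt_def axis_def)

lemma sum_UNIV_option: "(\<Sum>a\<in>UNIV. f a) = f None + (\<Sum>k\<in>UNIV. f (Some k))"
  for f :: "'n::finite option \<Rightarrow> 'a::comm_monoid_add"
  by (simp add: UNIV_option_conv sum.reindex)

lemma sum_Basis_inner_vec: "(\<Sum>b\<in>Basis. g (y \<bullet> b)) = (\<Sum>k\<in>UNIV. g (y $ k))"
  for y :: "real^'n::finite"
proof -
  have inj: "inj (\<lambda>k::'n. axis k (1::real))"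
    by (auto simp: inj_on_def axis_eq_axis)
  have Basis_eq: "(Basis :: (real^'n) set) = range (\<lambda>k. axis k 1)"
    unfolding Basis_vec_def by auto
  show ?thesis
    unfolding Basis_eq sum.reindex[OF inj] by (simp add: inner_axis)
qed

lemma mem_pos_neg_body_vec:
  "y \<in> pos_neg_body \<longleftrightarrow> (\<Sum>k\<in>UNIV. max (y $ k) 0) \<le> 1 \<and> (\<Sum>k\<in>UNIV. max (- (y $ k)) 0) \<le> 1"
  for y :: "real^'n::finite"
  using sum_Basis_inner_vec[of "\<lambda>z. max z 0" y] sum_Basis_inner_vec[of "\<lambda>z. max (- z) 0" y]
  by (simp add: pos_neg_body_def)

lemma epsilon_diffs_subset_pos_neg_body: "epsilon_diffs \<subseteq> pos_neg_body"
proof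
  fix r :: "real^'n" assume "r \<in> epsilon_diffs"
  then obtain a b where r: "r = axis_opt a - axis_opt b"
    unfolding epsilon_diffs_def by auto
  have at_most_one: "(\<Sum>k\<in>UNIV. if c = Some k then 1 else 0) \<le> (1::real)" for c :: "'n option"
    by (cases c) auto
  have "(\<Sum>k\<in>UNIV. max (r $ k) 0) \<le> (\<Sum>k\<in>UNIV. if a = Some k then 1 else 0)"
    "(\<Sum>k\<in>UNIV. max (- (r $ k)) 0) \<le> (\<Sum>k\<in>UNIV. if b = Some k then 1 else 0)"
    by (auto intro!: sum_mono simp: r axis_opt_nth)
  then show "r \<in> pos_neg_body"
    using at_most_one[of a] at_most_one[of b] by (simp add: mem_pos_neg_body_vec)
qed

lemma pos_neg_body_subset_convex_hull_epsilon_diffs: "pos_neg_body \<subseteq> convex hull epsilon_diffs"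
proof
  fix y :: "real^'n" assume "y \<in> pos_neg_body"
  define d where "d a = (case a of None \<Rightarrow> - (\<Sum>k\<in>UNIV. y $ k) | Some k \<Rightarrow> y $ k)" for a
  have "(\<Sum>a\<in>UNIV. d a) = 0"
    by (simp add: sum_UNIV_option d_def)
  moreover have "(\<Sum>a\<in>UNIV. max (d a) 0) \<le> 1"
  proof -
    have "(\<Sum>k\<in>UNIV. y $ k) = (\<Sum>k\<in>UNIV. max (y $ k) 0) - (\<Sum>k\<in>UNIV. max (- (y $ k)) 0)"
      by (simp flip: sum_subtractf) (intro sum.cong; auto)
    then show ?thesis
      using \<open>y \<in> pos_neg_body\<close> by (auto simp: sum_UNIV_option d_def mem_pos_neg_body_vec)
  qed
  ultimately have "(\<Sum>a\<in>UNIV. d a *\<^sub>R axis_opt a) \<in> convex hull {axis_opt a - axis_opt b | a b. a \<in> UNIV \<and> b \<in> UNIV}"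
    by (intro zero_sum_combination_in_convex_hull_differences) auto
  moreover have "(\<Sum>a\<in>UNIV. d a *\<^sub>R axis_opt a) = y"
    by (simp add: vec_eq_iff axis_opt_nth d_def sum_UNIV_option if_distrib cong: if_cong)
  ultimately show "y \<in> convex hull epsilon_diffs"
    by (simp add: epsilon_diffs_def)
qed

lemma convex_hull_epsilon_diffs: "convex hull epsilon_diffs = pos_neg_body"
  using pos_neg_body_subset_convex_hull_epsilon_diffs epsilon_diffs_subset_pos_neg_body convex_pos_neg_body
  by (metis convex_hull_eq hull_mono subset_antisym)

section \<open>From root differences to simple root coordinates\<close>

definition partial_sums :: "real^'n::{finite,linorder} \<Rightarrow> real^'n::{finite,linorder}" where
  "partial_sums y = (\<chi> k. \<Sum>j\<in>{..k}. y $ j)"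

lemma linear_partial_sums: "linear partial_sums"
  by (rule linearI) (simp_all add: partial_sums_def vec_eq_iff sum.distrib sum_distrib_left)

lemma det_partial_sums: "det (matrix (partial_sums :: real^'n::{finite,wellorder} \<Rightarrow> real^'n::{finite,wellorder})) = 1"
proof -
  have "matrix partial_sums $ i $ j = (if j \<le> i then 1 else 0)" for i j :: 'n
    by (simp add: matrix_def partial_sums_def axis_def)
  then show ?thesis
    by (subst det_lowerdiagonal) auto
qed

fun precedes :: "'n::linorder \<Rightarrow> 'n option \<Rightarrow> bool" where
  "precedes k None = True"
| "precedes k (Some j) = (k < j)"

lemma partial_sums_axis_opt:
  "partial_sums (axis_opt a :: real^'n::{finite,linorder}) = (\<chi> k. if precedes k a then 0 else 1)"
  by (cases a) (auto simp: partial_sums_def axis_opt_nth vec_eq_iff)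

lemma precedes_iff_le_Max:
  fixes i :: "'n::{finite,linorder}"
  assumes "precedes i b"
  obtains m where "i \<le> m" "\<And>k. precedes k b \<longleftrightarrow> k \<le> m"
proof
  let ?m = "Max {k. precedes k b}"
  have down: "precedes k b" if "k \<le> l" "precedes l b" for k l
    using that by (cases b) auto
  show "i \<le> ?m"
    using assms by simp
  show "precedes k b \<longleftrightarrow> k \<le> ?m" for k
    using Max_in[of "{k. precedes k b}"] assms down by auto
qed

lemma ex_precedes_iff_le:
  fixes j :: "'n::{finite,linorder}"
  obtains b where "\<And>k. precedes k b \<longleftrightarrow> k \<le> j"
proof (cases "\<exists>k. j < k")
  case True
  let ?b = "Some (Min {k. j < k})"
  have "precedes k ?b \<longleftrightarrow> k \<le> j" for k
  proof -
    have "precedes k ?b \<longleftrightarrow> (\<forall>l\<in>{k. j < k}. k < l)"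
      using True by (simp add: Min_gr_iff)
    also have "\<dots> \<longleftrightarrow> k \<le> j"
      by (meson le_less_trans less_irrefl mem_Collect_eq not_le)
    finally show ?thesis .
  qed
  then show ?thesis by (rule that)
next
  case False
  then have "precedes k None \<longleftrightarrow> k \<le> j" for k
    by (auto simp: not_less)
  then show ?thesis by (rule that)
qed

lemma partial_sums_axis_opt_diff_eq_interval_root:
  assumes "i \<le> m" "\<And>k. precedes k b \<longleftrightarrow> k \<le> m"
  shows "partial_sums (axis_opt (Some i) - axis_opt b) = interval_root i m"
proof -
  have "(if k < i then 0 else 1) - (if k \<le> m then 0 else 1) = (if i \<le> k \<and> k \<le> m then 1 else 0 :: real)" for k
    using assms(1) by auto
  then show ?thesis
    by (simp add: linear_diff[OF linear_partial_sums] partial_sums_axis_opt interval_root_def vec_eq_iff assms(2))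
qed

lemma precedes_cases: "a = b \<or> (\<exists>i. a = Some i \<and> precedes i b) \<or> (\<exists>j. b = Some j \<and> precedes j a)"
  by (cases a; cases b) (auto simp: neq_iff)

lemma partial_sums_diff_mem_pos_roots_A:
  assumes "precedes i c"
  shows "partial_sums (axis_opt (Some i) - axis_opt c) \<in> pos_roots_A"
proof -
  obtain m where "i \<le> m" "\<And>k. precedes k c \<longleftrightarrow> k \<le> m"
    using precedes_iff_le_Max[OF assms] by blast
  then show ?thesis
    unfolding pos_roots_A_def using partial_sums_axis_opt_diff_eq_interval_root by blast
qed

lemma interval_root_mem_partial_sums_image:
  assumes "i \<le> j"
  shows "interval_root i j \<in> partial_sums ` epsilon_diffs" "- interval_root i j \<in> partial_sums ` epsilon_diffs"
proof -
  obtain b where "\<And>k. precedes k b \<longleftrightarrow> k \<le> j"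
    using ex_precedes_iff_le by blast
  then have "interval_root i j = partial_sums (axis_opt (Some i) - axis_opt b)"
    using partial_sums_axis_opt_diff_eq_interval_root[OF assms] by metis
  moreover have "- \<dots> = partial_sums (axis_opt b - axis_opt (Some i))"
    by (simp add: linear_diff[OF linear_partial_sums])
  ultimately show "interval_root i j \<in> partial_sums ` epsilon_diffs" "- interval_root i j \<in> partial_sums ` epsilon_diffs"
    by (auto simp: epsilon_diffs_def)
qed

lemma partial_sums_image_epsilon_diffs:
  "partial_sums ` (epsilon_diffs :: (real^'n::{finite,linorder}) set) = insert 0 (pos_roots_A \<union> uminus ` pos_roots_A)"
proof (intro equalityI subsetI)
  fix r assume "r \<in> partial_sums ` epsilon_diffs"
  then obtain a b where r: "r = partial_sums (axis_opt a - axis_opt b)"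
    by (auto simp: epsilon_diffs_def)
  consider "a = b" | i where "a = Some i" "precedes i b" | j where "b = Some j" "precedes j a"
    using precedes_cases by blast
  then show "r \<in> insert 0 (pos_roots_A \<union> uminus ` pos_roots_A)"
  proof cases
    case 1
    then show ?thesis by (simp add: r linear_0[OF linear_partial_sums])
  next
    case 2
    then show ?thesis using partial_sums_diff_mem_pos_roots_A r by blast
  next
    case 3
    then have "- r \<in> pos_roots_A"
      using partial_sums_diff_mem_pos_roots_A by (simp add: r linear_diff[OF linear_partial_sums])
    then show ?thesis by (metis UnI2 add.inverse_inverse image_eqI insertI2)
  qed
next
  have "axis_opt None - axis_opt None \<in> (epsilon_diffs :: (real^'n::{finite,linorder}) set)"
    unfolding epsilon_diffs_def by blast
  then have zero: "(0 :: real^'n::{finite,linorder}) \<in> partial_sums ` epsilon_diffs"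
    using linear_0[OF linear_partial_sums] by (metis diff_self image_eqI)
  fix r :: "real^'n::{finite,linorder}"
  assume "r \<in> insert 0 (pos_roots_A \<union> uminus ` pos_roots_A)"
  then consider "r = 0" | i j where "i \<le> j" "r = interval_root i j" | i j where "i \<le> j" "r = - interval_root i j"
    unfolding pos_roots_A_def by blast
  then show "r \<in> partial_sums ` epsilon_diffs"
    by cases (simp_all add: zero interval_root_mem_partial_sums_image)
qed

lemma root_polytope_A_eq_partial_sums_image:
  "(root_polytope_A :: (real^'n::{finite,linorder}) set) = partial_sums ` pos_neg_body"
proof -
  let ?R = "(pos_roots_A \<union> uminus ` pos_roots_A) :: (real^'n::{finite,linorder}) set"
  obtain i :: 'n where True by simp
  have "interval_root i i \<in> ?R" "- interval_root i i \<in> ?R"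
    unfolding pos_roots_A_def by blast+
  then have "(1/2) *\<^sub>R interval_root i i + (1/2) *\<^sub>R (- interval_root i i) \<in> convex hull ?R"
    by (intro convexD[OF convex_convex_hull] hull_inc) auto
  then have "0 \<in> convex hull ?R"
    by simp
  then have "root_polytope_A = convex hull (insert 0 ?R)"
    unfolding root_polytope_A_def by (rule hull_redundant[symmetric])
  also have "\<dots> = convex hull (partial_sums ` epsilon_diffs)"
    by (simp add: partial_sums_image_epsilon_diffs)
  also have "\<dots> = partial_sums ` pos_neg_body"
    by (simp add: convex_hull_linear_image[OF linear_partial_sums, symmetric] convex_hull_epsilon_diffs)
  finally show ?thesis .
qed

lemma measure_root_polytope_A_wellorder:
  "measure lebesgue (root_polytope_A :: (real^'n::{finite,wellorder}) set)
     = real ((2 * CARD('n)) choose CARD('n)) / fact CARD('n)"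
  unfolding root_polytope_A_eq_partial_sums_image
    measure_linear_image[OF linear_partial_sums lmeasurable_pos_neg_body] det_partial_sums measure_pos_neg_body
  by simp

section \<open>Independence of the order type of the index set\<close>

definition vec_reindex :: "('m \<Rightarrow> 'n) \<Rightarrow> real^'n::finite \<Rightarrow> real^'m::finite" where
  "vec_reindex \<sigma> x = (\<chi> i. x $ \<sigma> i)"

lemma linear_vec_reindex: "linear (vec_reindex \<sigma>)"
  by (rule linearI) (simp_all add: vec_reindex_def vec_eq_iff)

lemma vec_reindex_vec_reindex: "vec_reindex \<sigma> (vec_reindex \<tau> x) = vec_reindex (\<tau> \<circ> \<sigma>) x"
  by (simp add: vec_reindex_def)

lemma vec_reindex_id: "vec_reindex id x = x"
  by (simp add: vec_reindex_def)

lemma image_vec_reindex_eq_vimage: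
  assumes "bij \<sigma>"
  shows "vec_reindex \<sigma> ` S = vec_reindex (inv \<sigma>) -` S"
proof -
  have "inv \<sigma> \<circ> \<sigma> = id" "\<sigma> \<circ> inv \<sigma> = id"
    using assms by (simp_all add: bij_is_inj bij_is_surj flip: inj_iff surj_iff)
  then show ?thesis
    by (auto simp: vec_reindex_vec_reindex vec_reindex_id intro!: image_eqI)
qed

lemma prod_Basis_inner_vec: "(\<Prod>b\<in>Basis. g (y \<bullet> b)) = (\<Prod>k\<in>UNIV. g (y $ k))"
  for y :: "real^'n::finite"
proof -
  have inj: "inj (\<lambda>k::'n. axis k (1::real))"
    by (auto simp: inj_on_def axis_eq_axis)
  have Basis_eq: "(Basis :: (real^'n) set) = range (\<lambda>k. axis k 1)"
    unfolding Basis_vec_def by auto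
  show ?thesis
    unfolding Basis_eq prod.reindex[OF inj] by (simp add: inner_axis)
qed

lemma lborel_distr_vec_reindex:
  fixes \<sigma> :: "'m::finite \<Rightarrow> 'n::finite"
  assumes "bij \<sigma>"
  shows "distr lborel borel (vec_reindex \<sigma> :: real^'n \<Rightarrow> real^'m) = lborel"
proof (rule lborel_eqI[symmetric])
  have Basis_le_iff: "(\<forall>b\<in>Basis. x \<bullet> b \<le> y \<bullet> b) \<longleftrightarrow> (\<forall>i. x $ i \<le> y $ i)" for x y :: "real^'k::finite"
    by (simp add: eucl_le[symmetric] less_eq_vec_def)
  fix l u :: "real^'m"
  assume "\<And>b. b \<in> Basis \<Longrightarrow> l \<bullet> b \<le> u \<bullet> b"
  then have le: "l $ i \<le> u $ i" for i
    using Basis_le_iff by blast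
  have [measurable]: "vec_reindex \<sigma> \<in> borel_measurable (borel :: (real^'n) measure)"
    by (intro borel_measurable_continuous_onI linear_continuous_on linear_conv_bounded_linear[THEN iffD1]
        linear_vec_reindex)
  have "vec_reindex \<sigma> -` box l u = box (vec_reindex (inv \<sigma>) l) (vec_reindex (inv \<sigma>) u)"
    using assms by (auto simp: mem_box_cart vec_reindex_def bij_inv_eq_iff) (metis bij_inv_eq_iff)+
  then have "emeasure (distr lborel borel (vec_reindex \<sigma>)) (box l u)
      = (\<Prod>k\<in>UNIV. u $ inv \<sigma> k - l $ inv \<sigma> k)"
    using le Basis_le_iff[of "vec_reindex (inv \<sigma>) l" "vec_reindex (inv \<sigma>) u"]
    by (simp add: emeasure_distr prod_Basis_inner_vec[of "\<lambda>z. z"] vec_reindex_def)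
  also have "\<dots> = (\<Prod>i\<in>UNIV. u $ i - l $ i)"
    using prod.reindex_bij_betw[OF bij_betw_inv_into[OF assms], of "\<lambda>i. u $ i - l $ i"] by simp
  finally show "emeasure (distr lborel borel (vec_reindex \<sigma>)) (box l u) = (\<Prod>b\<in>Basis. (u - l) \<bullet> b)"
    by (simp add: prod_Basis_inner_vec[of "\<lambda>z. z"])
qed simp

lemma measure_image_vec_reindex:
  fixes \<sigma> :: "'m::finite \<Rightarrow> 'n::finite" and S :: "(real^'n) set"
  assumes "bij \<sigma>" "S \<in> sets borel"
  shows "measure lebesgue (vec_reindex \<sigma> ` S) = measure lebesgue S"
proof -
  have "bij (inv \<sigma>)"
    using assms(1) by (rule bij_imp_bij_inv)
  have meas: "vec_reindex (inv \<sigma>) \<in> borel_measurable (borel :: (real^'m) measure)"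
    by (intro borel_measurable_continuous_onI linear_continuous_on linear_conv_bounded_linear[THEN iffD1]
        linear_vec_reindex)
  from measurable_sets[OF meas assms(2)] have "vec_reindex (inv \<sigma>) -` S \<in> sets lborel"
    by simp
  then have "measure lebesgue (vec_reindex (inv \<sigma>) -` S) = measure lborel (vec_reindex (inv \<sigma>) -` S)"
    by (rule measure_completion)
  also have "\<dots> = measure (distr lborel borel (vec_reindex (inv \<sigma>))) S"
    using meas assms(2) by (simp add: measure_distr)
  also have "\<dots> = measure lborel S"
    by (simp add: lborel_distr_vec_reindex[OF \<open>bij (inv \<sigma>)\<close>])
  also have "\<dots> = measure lebesgue S"
    using assms(2) by (intro measure_completion[symmetric]) simp
  finally show ?thesis
    by (simp add: image_vec_reindex_eq_vimage[OF assms(1)])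
qed

lemma vec_reindex_interval_root:
  assumes "\<And>a b. \<sigma> a \<le> \<sigma> b \<longleftrightarrow> a \<le> b"
  shows "vec_reindex \<sigma> (interval_root (\<sigma> i) (\<sigma> j)) = interval_root i j"
  using assms by (simp add: vec_reindex_def interval_root_def vec_eq_iff)

lemma image_vec_reindex_root_polytope_A:
  fixes \<sigma> :: "'m::{finite,linorder} \<Rightarrow> 'n::{finite,linorder}"
  assumes "bij \<sigma>" "\<And>a b. \<sigma> a \<le> \<sigma> b \<longleftrightarrow> a \<le> b"
  shows "vec_reindex \<sigma> ` root_polytope_A = root_polytope_A"
proof -
  have "vec_reindex \<sigma> ` pos_roots_A = pos_roots_A"
  proof (intro equalityI subsetI)
    fix r assume "r \<in> vec_reindex \<sigma> ` pos_roots_A"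
    then obtain i j where "i \<le> j" "r = vec_reindex \<sigma> (interval_root i j)"
      by (auto simp: pos_roots_A_def)
    moreover have "i = \<sigma> (inv \<sigma> i)" "j = \<sigma> (inv \<sigma> j)"
      using assms(1) by (simp_all add: bij_is_surj surj_f_inv_f)
    ultimately have "inv \<sigma> i \<le> inv \<sigma> j" "r = interval_root (inv \<sigma> i) (inv \<sigma> j)"
      using assms(2) vec_reindex_interval_root[OF assms(2)] by metis+
    then show "r \<in> pos_roots_A"
      unfolding pos_roots_A_def by blast
  next
    fix r :: "real^'m::{finite,linorder}" assume "r \<in> pos_roots_A"
    then obtain i j where "i \<le> j" "r = interval_root i j"
      by (auto simp: pos_roots_A_def)
    then have "r = vec_reindex \<sigma> (interval_root (\<sigma> i) (\<sigma> j))" "\<sigma> i \<le> \<sigma> j"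
      using vec_reindex_interval_root[OF assms(2)] assms(2) by auto
    then show "r \<in> vec_reindex \<sigma> ` pos_roots_A"
      unfolding pos_roots_A_def by blast
  qed
  moreover have "vec_reindex \<sigma> ` uminus ` pos_roots_A = uminus ` vec_reindex \<sigma> ` pos_roots_A"
    by (simp add: image_image linear_neg[OF linear_vec_reindex])
  ultimately show ?thesis
    unfolding root_polytope_A_def convex_hull_linear_image[OF linear_vec_reindex] image_Un by simp
qed

lemma finite_pos_roots_A: "finite pos_roots_A"
proof -
  have "pos_roots_A \<subseteq> (\<lambda>(i, j). interval_root i j) ` UNIV"
    unfolding pos_roots_A_def by auto
  then show ?thesis
    by (rule finite_subset) simp
qed

lemma measure_root_polytope_A_order_iso:
  fixes \<sigma> :: "'m::{finite,linorder} \<Rightarrow> 'n::{finite,linorder}"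
  assumes "bij \<sigma>" "\<And>a b. \<sigma> a \<le> \<sigma> b \<longleftrightarrow> a \<le> b"
  shows "measure lebesgue (root_polytope_A :: (real^'m::{finite,linorder}) set)
       = measure lebesgue (root_polytope_A :: (real^'n::{finite,linorder}) set)"
proof -
  have "compact (root_polytope_A :: (real^'n::{finite,linorder}) set)"
    unfolding root_polytope_A_def by (intro finite_imp_compact_convex_hull) (simp add: finite_pos_roots_A)
  then show ?thesis
    using measure_image_vec_reindex[OF assms(1)] image_vec_reindex_root_polytope_A[OF assms]
    by (metis borel_compact)
qed

text \<open>The change of variables formula for linear maps is only available for well-ordered index
  types; \<open>'a wo\<close> is a copy of a finite linear order which is one.\<close>
typedef 'a wo = "UNIV :: 'a set"
  by auto

instantiation wo :: (linorder) linorder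
begin
definition less_eq_wo :: "'a wo \<Rightarrow> 'a wo \<Rightarrow> bool" where "less_eq_wo x y = (Rep_wo x \<le> Rep_wo y)"
definition less_wo :: "'a wo \<Rightarrow> 'a wo \<Rightarrow> bool" where "less_wo x y = (Rep_wo x < Rep_wo y)"
instance
  by standard (auto simp: less_eq_wo_def less_wo_def Rep_wo_inject[symmetric] less_le_not_le)
end

instance wo :: (finite) finite
proof
  have UNIV_eq: "(UNIV :: 'a wo set) = Abs_wo ` UNIV"
    by (metis Rep_wo_inverse UNIV_I image_eqI subsetI subset_antisym top_greatest)
  show "finite (UNIV :: 'a wo set)"
    unfolding UNIV_eq by simp
qed

instance wo :: ("{finite,linorder}") wellorder
proof
  fix P :: "'a wo \<Rightarrow> bool" and a :: "'a wo"
  assume step: "\<And>x. (\<And>y. y < x \<Longrightarrow> P y) \<Longrightarrow> P x"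
  show "P a"
  proof (induction "card {y. y < a}" arbitrary: a rule: less_induct)
    case less
    show ?case
    proof (rule step)
      fix y assume "y < a"
      then have "{z. z < y} \<subset> {z. z < a}"
        by auto
      then show "P y"
        by (intro less psubset_card_mono) simp_all
    qed
  qed
qed

lemma bij_Rep_wo: "bij Rep_wo"
  by (metis Rep_wo_inject Rep_wo_cases UNIV_I bijI injI surjI)

lemma measure_root_polytope_A:
  "measure lebesgue (root_polytope_A :: (real^'n::{finite,linorder}) set)
     = real ((2 * CARD('n)) choose CARD('n)) / fact CARD('n)"
proof -
  have "measure lebesgue (root_polytope_A :: (real^'n::{finite,linorder} wo) set)
      = measure lebesgue (root_polytope_A :: (real^'n::{finite,linorder}) set)"
    by (rule measure_root_polytope_A_order_iso[OF bij_Rep_wo]) (simp add: less_eq_wo_def)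
  moreover have "CARD('n wo) = CARD('n)"
    using bij_Rep_wo by (rule bij_betw_same_card)
  ultimately show ?thesis
    using measure_root_polytope_A_wellorder[where 'n="'n wo"] by simp
qed

lemma sum_choose_shifted_eq_central_binomial:
  assumes "n \<ge> 1"
  shows "(\<Sum>i=1..n. ((n - 1) choose (i - 1)) * ((n + 1) choose i)) = (2 * n) choose n"
proof -
  have "{1..n} = Suc ` {..<n}"
    by (simp add: atLeast1_atMost_eq_remove0 lessThan_Suc_atMost[symmetric] image_Suc_lessThan)
  then have "(\<Sum>i=1..n. ((n - 1) choose (i - 1)) * ((n + 1) choose i))
      = (\<Sum>k<n. ((n - 1) choose k) * ((n + 1) choose Suc k))"
    by (simp add: sum.reindex)
  also have "\<dots> = (\<Sum>k<n. ((n - 1) choose k) * ((n + 1) choose (n - k)))"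
  proof (intro sum.cong refl)
    fix k assume "k \<in> {..<n}"
    then have "(n + 1) choose Suc k = (n + 1) choose (n + 1 - Suc k)"
      by (intro binomial_symmetric) auto
    then show "((n - 1) choose k) * ((n + 1) choose Suc k) = ((n - 1) choose k) * ((n + 1) choose (n - k))"
      by simp
  qed
  also have "\<dots> = (\<Sum>k\<le>n. ((n - 1) choose k) * ((n + 1) choose (n - k)))"
    using assms by (simp add: lessThan_Suc_atMost[symmetric])
  also have "\<dots> = ((n - 1) + (n + 1)) choose n"
    by (rule vandermonde)
  finally show ?thesis
    using assms by (simp add: mult_2)
qed

theorem lemma4p2:
  fixes n :: nat
  assumes "n = CARD('n::{finite,linorder})"
  shows "int_vol (root_polytope_A :: (real^('n::{finite,linorder})) set)
           = real (\<Sum>i=1..n. ((n - 1) choose (i - 1)) * ((n + 1) choose i))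
       \<and> (\<Sum>i=1..n. ((n - 1) choose (i - 1)) * ((n + 1) choose i)) = (2 * n) choose n"
proof -
  have "n \<ge> 1"
    using assms by (simp add: Suc_le_eq)
  then have sum_eq: "(\<Sum>i=1..n. ((n - 1) choose (i - 1)) * ((n + 1) choose i)) = (2 * n) choose n"
    by (rule sum_choose_shifted_eq_central_binomial)
  have "int_vol (root_polytope_A :: (real^'n::{finite,linorder}) set) = real ((2 * n) choose n)"
    unfolding int_vol_def measure_root_polytope_A assms by simp
  with sum_eq show ?thesis
    by simp
qed

end
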